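(* Let $n\geq 4$ and let $T=S_{x,y}$ be a double star on $n$ vertices, where $x+y=n-2$. If $T$ is maximal with respect to $e^{M_2}$ among all double stars on $n$ vertices, then $|x-y|\leq 1$, i.e., $T$ is the balanced double star $S_{\lfloor\frac{n-2}{2}\rfloor,\lceil\frac{n-2}{2}\rceil}$. Moreover, $$e^{M_2}(S_{\lfloor\frac{n-2}{2}\rfloor,\lceil\frac{n-2}{2}\rceil})=\begin{cases} e^{\frac{n^2}{4}}+(n-2)e^{\frac{n}{2}}, & n \text{ even},\\ e^{\frac{n^2-1}{4}}+\frac{n-3}{2}e^{\frac{n-1}{2}}+\frac{n-1}{2}e^{\frac{n+1}{2}}, & n\text{ odd}.\end{cases}$$
   Context: For a tree $G$ with edge set $E(G)$ and vertex degrees $d_G(v)$, the exponential of the second Zagreb index is $e^{M_2}(G)=\sum_{uv\in E(G)} e^{d_G(u)d_G(v)}$. For integers $x,y\geq 1$, the double star $S_{x,y}$ is the tree on $x+y+2$ vertices with exactly two non-pendent vertices, of degrees $x+1$ and $y+1$ (these two vertices are adjacent, the first has $x$ pendant neighbours and the second has $y$ pendant neighbours). *)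

theory Defs
  imports Complex_Main
begin

text \<open>A (simple, undirected) graph is given by its edge set; each edge is a
2-element set of vertices.  Degree of a vertex = number of edges containing it.\<close>

definition deg :: "'a set set \<Rightarrow> 'a \<Rightarrow> nat" where
  "deg E v = card {e \<in> E. v \<in> e}"

definition eM2 :: "'a set set \<Rightarrow> real" where
  "eM2 E = (\<Sum>e\<in>E. exp (real (\<Prod>v\<in>e. deg E v)))"

definition double_star :: "nat \<Rightarrow> nat \<Rightarrow> nat set set" where
  "double_star x y =
     {{0, 1}} \<union> {{0, i} | i. i \<in> {2..x+1}} \<union> {{1, i} | i. i \<in> {x+2..x+y+1}}"

end

theory Submission
  imports Defs
begin

text \<open>
  The weight of \<open>S\<^sub>x\<^sub>,\<^sub>y\<close> is \<open>exp ((x+1)(y+1)) + x exp (x+1) + y exp (y+1)\<close>.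
  Passing from \<open>S\<^sub>x\<^sub>+\<^sub>1\<^sub>,\<^sub>y\<close> to \<open>S\<^sub>x\<^sub>,\<^sub>y\<^sub>+\<^sub>1\<close> with \<open>y < x\<close> raises the
  exponent of the central edge by \<open>x - y \<ge> 1\<close>, so the central weight at least doubles;
  the gain \<open>exp ((x+2)(y+1)) \<ge> exp (2(x+2))\<close> exceeds the at most \<open>(x+1) exp (x+2)\<close>
  lost on the pendant edges.
\<close>

lemma mem_double_star:
  "e \<in> double_star x y \<longleftrightarrow>
     e = {0, 1} \<or> (\<exists>i\<in>{2..x+1}. e = {0, i}) \<or> (\<exists>i\<in>{x+2..x+y+1}. e = {1, i})"
  unfolding double_star_def by blast

lemma inj_on_doubleton: "inj_on (\<lambda>i. {c, i}) A"
  by (auto simp: inj_on_def doubleton_eq_iff)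

lemma deg_double_star_0: "deg (double_star x y) 0 = x + 1"
proof -
  have "{e \<in> double_star x y. 0 \<in> e} = (\<lambda>i. {0, i}) ` {1..x+1}"
    by (auto simp: mem_double_star)
  then show ?thesis
    by (simp add: deg_def card_image inj_on_doubleton)
qed

lemma deg_double_star_1: "deg (double_star x y) 1 = y + 1"
proof -
  have edges: "{e \<in> double_star x y. 1 \<in> e} = (\<lambda>i. {1, i}) ` insert 0 {x+2..x+y+1}"
    by (auto simp: mem_double_star)
  have "deg (double_star x y) 1 = card (insert 0 {x+2..x+y+1})"
    unfolding deg_def edges by (rule card_image[OF inj_on_doubleton])
  then show ?thesis
    by simp
qed

lemma deg_double_star_leaf:
  assumes "2 \<le> i" "i \<le> x + y + 1"
  shows "deg (double_star x y) i = 1"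
proof -
  have "{e \<in> double_star x y. i \<in> e} = {if i \<le> x + 1 then {0, i} else {1, i}}"
    using assms by (auto simp: mem_double_star)
  then show ?thesis
    by (simp add: deg_def)
qed

lemma sum_double_star:
  "(\<Sum>e\<in>double_star x y. f e) = f {0, 1} + (\<Sum>i=2..x+1. f {0, i}) + (\<Sum>i=x+2..x+y+1. f {1, i})"
proof -
  have "double_star x y = insert {0, 1} ((\<lambda>i. {0, i}) ` {2..x+1} \<union> (\<lambda>i. {1, i}) ` {x+2..x+y+1})"
    unfolding double_star_def by blast
  moreover have "{0, 1} \<notin> (\<lambda>i. {0, i}) ` {2..x+1} \<union> (\<lambda>i. {1, i}) ` {x+2..x+y+1}"
    by (fastforce simp: doubleton_eq_iff)
  moreover have "(\<lambda>i. {0, i}) ` {2..x+1} \<inter> (\<lambda>i. {1, i}) ` {x+2..x+y+1} = {}"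
    by (fastforce simp: doubleton_eq_iff)
  ultimately show ?thesis
    by (simp add: sum.union_disjoint sum.reindex inj_on_doubleton add.assoc)
qed

lemma eM2_double_star:
  "eM2 (double_star x y) =
     exp (real ((x + 1) * (y + 1))) + real x * exp (real (x + 1)) + real y * exp (real (y + 1))"
proof -
  let ?d = "deg (double_star x y)"
  have "(\<Prod>v\<in>{0, 1}. ?d v) = ?d 0 * ?d 1"
    by simp
  then have centre: "(\<Prod>v\<in>{0, 1}. ?d v) = (x + 1) * (y + 1)"
    by (simp only: deg_double_star_0 deg_double_star_1)
  have "(\<Sum>i=2..x+1. exp (real (\<Prod>v\<in>{0, i}. ?d v))) = (\<Sum>i=2..x+1. exp (real (x + 1)))"
    by (rule sum.cong[OF refl]) (simp add: deg_double_star_0 deg_double_star_leaf)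
  moreover have "(\<Sum>i=x+2..x+y+1. exp (real (\<Prod>v\<in>{1, i}. ?d v))) =
      (\<Sum>i=x+2..x+y+1. exp (real (y + 1)))"
    \<comment> \<open>the simplifier rewrites the vertex \<open>1\<close> to \<open>Suc 0\<close> in this goal\<close>
    by (rule sum.cong[OF refl])
      (simp add: deg_double_star_1[unfolded One_nat_def] deg_double_star_leaf)
  ultimately show ?thesis
    unfolding eM2_def sum_double_star centre by simp
qed

lemma eM2_double_star_commute: "eM2 (double_star x y) = eM2 (double_star y x)"
  by (simp add: eM2_double_star algebra_simps)

lemma eM2_double_star_rebalance_less:
  assumes "1 \<le> y" and "y < x"
  shows "eM2 (double_star (x + 1) y) < eM2 (double_star x (y + 1))"
proof -
  define P where "P = real ((x + 1 + 1) * (y + 1))"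
  define Q where "Q = real ((x + 1) * (y + 1 + 1))"
  have "(x + 1 + 1) * (y + 1) + 1 \<le> (x + 1) * (y + 1 + 1)"
    using assms(2) by (simp add: algebra_simps)
  then have "P + 1 \<le> Q"
    unfolding P_def Q_def by (metis of_nat_1 of_nat_add of_nat_le_iff)
  then have "exp P * exp 1 \<le> exp Q"
    by (simp flip: exp_add)
  moreover have "exp P * 2 \<le> exp P * exp 1"
    using exp_ge_add_one_self[of 1] by simp
  ultimately have centre_gain: "2 * exp P \<le> exp Q"
    by linarith
  have "real (x + 1) < exp (real (x + 1 + 1))"
    using exp_ge_add_one_self[of "real (x + 1 + 1)"] by simp
  then have "real (x + 1) * exp (real (x + 1 + 1)) < exp (real (x + 1 + 1)) * exp (real (x + 1 + 1))"
    by simp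
  also have "\<dots> = exp (real (2 * (x + 1 + 1)))"
    by (simp flip: exp_add)
  also have "\<dots> \<le> exp P"
  proof -
    have "2 * (x + 1 + 1) \<le> (x + 1 + 1) * (y + 1)"
      using mult_le_mono1[of 2 "y + 1" "x + 1 + 1"] assms(1) by (simp add: mult.commute)
    then show ?thesis
      unfolding P_def by (simp only: exp_le_cancel_iff of_nat_le_iff)
  qed
  finally have pendant_loss: "real (x + 1) * exp (real (x + 1 + 1)) < exp P" .
  have "real y * exp (real (y + 1)) \<le> real (y + 1) * exp (real (y + 1 + 1))"
    by (intro mult_mono) auto
  moreover have "0 \<le> real x * exp (real (x + 1))"
    by simp
  ultimately show ?thesis
    using centre_gain pendant_loss unfolding eM2_double_star P_def Q_def by linarith
qed

lemma balanced_split: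
  fixes x y m :: nat
  assumes "x + y = m" and "\<bar>int x - int y\<bar> \<le> 1"
  shows "{x, y} = {m div 2, (m + 1) div 2}"
proof -
  consider "m = 2 * x" "y = x" | "m = 2 * x + 1" "y = x + 1" | "m = 2 * y + 1" "x = y + 1"
    using assms by linarith
  then show ?thesis
    by cases (simp_all add: insert_commute)
qed

lemma eM2_balanced_double_star:
  assumes "2 \<le> n"
  shows "eM2 (double_star ((n - 2) div 2) ((n - 1) div 2)) =
    (if even n
     then exp (real n ^ 2 / 4) + (real n - 2) * exp (real n / 2)
     else exp ((real n ^ 2 - 1) / 4) + (real n - 3) / 2 * exp ((real n - 1) / 2)
          + (real n - 1) / 2 * exp ((real n + 1) / 2))"
proof -
  define k where "k = (n - 2) div 2"
  show ?thesis
  proof (cases "even n")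
    case True
    then have "n = 2 * k + 2" and half: "(n - 1) div 2 = k"
      using assms unfolding k_def by presburger+
    then have "real n ^ 2 / 4 = real ((k + 1) * (k + 1))" and "real n - 2 = real k + real k"
      and "real n / 2 = real (k + 1)"
      by (simp_all add: power2_eq_square algebra_simps)
    with True show ?thesis
      by (simp only: if_True k_def[symmetric] half eM2_double_star distrib_right)
  next
    case False
    then have "n = 2 * k + 3" and half: "(n - 1) div 2 = k + 1"
      using assms unfolding k_def by presburger+
    then have "(real n ^ 2 - 1) / 4 = real ((k + 1) * (k + 1 + 1))"
      and "(real n - 3) / 2 = real k" and "(real n - 1) / 2 = real (k + 1)"
      and "(real n + 1) / 2 = real (k + 1 + 1)"
      by (simp_all add: power2_eq_square algebra_simps)
    with False show ?thesis
      by (simp only: if_False k_def[symmetric] half eM2_double_star)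
  qed
qed

theorem lemma3:
  fixes n x y :: nat
  assumes "n \<ge> 4" and "x \<ge> 1" and "y \<ge> 1" and "x + y = n - 2"
    and "\<forall>x' y'. x' \<ge> 1 \<and> y' \<ge> 1 \<and> x' + y' = n - 2 \<longrightarrow>
                eM2 (double_star x' y') \<le> eM2 (double_star x y)"
  shows "\<bar>int x - int y\<bar> \<le> 1
    \<and> {x, y} = {(n - 2) div 2, (n - 1) div 2}
    \<and> eM2 (double_star ((n - 2) div 2) ((n - 1) div 2)) =
        (if even n
         then exp (real n ^ 2 / 4) + (real n - 2) * exp (real n / 2)
         else exp ((real n ^ 2 - 1) / 4) + (real n - 3) / 2 * exp ((real n - 1) / 2)
              + (real n - 1) / 2 * exp ((real n + 1) / 2))"
proof -
  have balanced: "\<bar>int x - int y\<bar> \<le> 1"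
  proof (rule ccontr)
    assume "\<not> ?thesis"
    then consider "y < x - 1" | "x < y - 1"
      by linarith
    then show False
    proof cases
      case 1
      then have "eM2 (double_star (x - 1 + 1) y) < eM2 (double_star (x - 1) (y + 1))"
        using assms(3) by (intro eM2_double_star_rebalance_less)
      moreover have "eM2 (double_star (x - 1) (y + 1)) \<le> eM2 (double_star x y)"
        using assms(4,5) 1 by simp
      ultimately show False
        using 1 by simp
    next
      case 2
      then have "eM2 (double_star (y - 1 + 1) x) < eM2 (double_star (y - 1) (x + 1))"
        using assms(2) by (intro eM2_double_star_rebalance_less)
      moreover have "eM2 (double_star (x + 1) (y - 1)) \<le> eM2 (double_star x y)"
        using assms(4,5) 2 by simp
      ultimately show False
        using 2 eM2_double_star_commute[of x y] eM2_double_star_commute[of "x + 1"] by simp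
    qed
  qed
  have "n - 2 + 1 = n - 1"
    using assms(1) by simp
  then have "{x, y} = {(n - 2) div 2, (n - 1) div 2}"
    using balanced_split[OF assms(4) balanced] by simp
  with balanced show ?thesis
    using eM2_balanced_double_star assms(1) by simp
qed

end
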